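(* Let $M$ be a compact orientable $d$-dimensional manifold with piecewise smooth boundary, let $g_{[0]}$ be a Riemannian metric on $M$, let $\overline{E}$ be a fixed smooth symmetric $(0,2)$-tensor field on $M$, and for a real parameter $\alpha$ let $g_{[t]}=g_{[0]}+2\alpha\overline{E}$ (a Riemannian metric for $|\alpha|$ small), so that the Green strain tensor is $E=\tfrac12(g_{[t]}-g_{[0]})=\alpha\overline{E}$. Let $C$ be a stiffness tensor field for the reference metric $g_{[0]}$, and define the strain energy $W=\int_M \tfrac12 C(E,E)\,\upsilon_{[0]}$, where $\upsilon_{[0]}$ is the Riemannian volume form of $g_{[0]}$. Define the swapped states by taking $g_{[\hat 0]}=g_{[t]}$ as reference metric and $g_{[\hat t]}=g_{[0]}$ as current metric, with swapped strain $\hat E=\tfrac12(g_{[\hat t]}-g_{[\hat 0]})$, swapped volume form $\upsilon_{[\hat 0]}$ (the volume form of $g_{[t]}$), a swapped stiffness tensor field $\hat C$ (the stiffness tensor field for the reference metric $g_{[t]}$) satisfying $\hat C\in C+O(\alpha)$, and swapped strain energy $\hat W=\int_M\tfrac12\hat C(\hat E,\hat E)\,\upsilon_{[\hat 0]}$. Then $\hat W\in W+O(\alpha^3)$ as $\alpha\to 0$; i.e. $W$ and $\hat W$ agree up to a residual term of order $\alpha^3$.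
   Context: A stiffness tensor field is a $(4,0)$-tensor field $C=C^{ijkl}\partial_{u^i}\otimes\partial_{u^j}\otimes\partial_{u^k}\otimes\partial_{u^l}$ with $C^{ijkl}=C^{klij}=C^{jikl}=C^{ijlk}$; $C(E,E)=C^{ijkl}E_{ij}E_{kl}$. In the isotropic case, $C^{ijkl}=\lambda g^{*ij}g^{*kl}+\mu(g^{*ik}g^{*jl}+g^{*il}g^{*jk})$ with $g^*$ the dual of the reference metric and $\lambda,\mu$ the Lamé parameters. $O(\alpha^k)$ denotes the class of quantities bounded by a constant times $|\alpha|^k$ as $\alpha\to0$. *)

theory Defs
  imports "HOL-Analysis.Analysis" "HOL-Library.Landau_Symbols"
begin

text \<open>Pointwise (frame) model of tensor fields on the manifold M.  At each point x,
  the tangent space is identified with real^'n via a (measurable) frame;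
  (0,2)-tensors are matrices real^'n^'n, (4,0)-tensors are functions of four indices.\<close>

type_synonym 'n tensor4 = "'n \<Rightarrow> 'n \<Rightarrow> 'n \<Rightarrow> 'n \<Rightarrow> real"

definition is_stiffness :: "('n::finite) tensor4 \<Rightarrow> bool" where
  "is_stiffness C \<longleftrightarrow> (\<forall>i j k l. C i j k l = C k l i j \<and> C i j k l = C j i k l \<and> C i j k l = C i j l k)"

definition contract :: "('n::finite) tensor4 \<Rightarrow> real^'n^'n \<Rightarrow> real" where
  "contract C E = (\<Sum>i\<in>UNIV. \<Sum>j\<in>UNIV. \<Sum>k\<in>UNIV. \<Sum>l\<in>UNIV. C i j k l * E$i$j * E$k$l)"

definition symmetric_mat :: "real^'n^'n \<Rightarrow> bool" where
  "symmetric_mat A \<longleftrightarrow> transpose A = A"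

definition cur_metric :: "('a \<Rightarrow> real^'n^'n) \<Rightarrow> ('a \<Rightarrow> real^'n^'n) \<Rightarrow> real \<Rightarrow> 'a \<Rightarrow> real^'n^'n" where
  "cur_metric g0 Eb \<alpha> x = g0 x + (2 * \<alpha>) *\<^sub>R Eb x"

definition green_strain :: "real^'n^'n \<Rightarrow> real^'n^'n \<Rightarrow> real^'n^'n" where
  "green_strain gref gcur = (1/2) *\<^sub>R (gcur - gref)"

text \<open>Density of the Riemannian volume form of g relative to that of g0 (in any
  oriented frame): upsilon_g = sqrt(det g / det g0) upsilon_g0.\<close>
definition vol_ratio :: "real^'n^'n \<Rightarrow> real^'n^'n \<Rightarrow> real" where
  "vol_ratio g0 g = sqrt (det g / det g0)"

text \<open>Strain energy int_M 1/2 C(E,E) upsilon, where the volume form upsilon is given by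
  its density rho w.r.t. the reference volume measure M (= upsilon_[0]).\<close>
definition strain_energy :: "'a measure \<Rightarrow> ('a \<Rightarrow> ('n::finite) tensor4) \<Rightarrow> ('a \<Rightarrow> real^'n^'n) \<Rightarrow> ('a \<Rightarrow> real) \<Rightarrow> real" where
  "strain_energy M C E \<rho> = (\<integral>x. (1/2) * contract (C x) (E x) * \<rho> x \<partial>M)"

end

theory Submission
  imports Defs
begin

text \<open>Both strains are multiples of \<open>Ebar\<close>: \<open>E = \<alpha> Ebar\<close> and \<open>Ehat = -\<alpha> Ebar\<close>. Hence \<open>W\<close>
  and \<open>What\<close> are the integrals of \<open>\<alpha>\<^sup>2/2\<close> times the densities \<open>C(Ebar, Ebar)\<close> and
  \<open>Chat(Ebar, Ebar) \<rho>\<close>, where \<open>\<rho> = sqrt (det g_[t] / det g_[0])\<close> is the volume ratio.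
  Now \<open>Chat = C + O(\<alpha>)\<close> by hypothesis, and \<open>\<rho> = 1 + O(\<alpha>)\<close> because the determinant is
  Lipschitz on bounded matrices while \<open>det g_[0]\<close> is bounded away from 0 by coercivity. So the
  densities differ by \<open>O(\<alpha>)\<close>, and integrating over the finite measure gives
  \<open>What - W = \<alpha>\<^sup>2 O(\<alpha>) = O(\<alpha>\<^sup>3)\<close>. All these bounds are uniform over the points of \<open>M\<close>.\<close>

section \<open>Uniform \<open>O\<close>-bounds as \<open>\<alpha> \<rightarrow> 0\<close>\<close>

definition uniformly_bigo :: "'a set \<Rightarrow> nat \<Rightarrow> (real \<Rightarrow> 'a \<Rightarrow> real) \<Rightarrow> bool" where
  "uniformly_bigo S k f \<longleftrightarrow> (\<exists>K. \<forall>\<^sub>F \<alpha> in at 0. \<forall>x\<in>S. \<bar>f \<alpha> x\<bar> \<le> K * \<bar>\<alpha>\<bar> ^ k)"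

lemma uniformly_bigoI:
  assumes "\<delta> > 0" and "\<And>\<alpha> x. \<bar>\<alpha>\<bar> < \<delta> \<Longrightarrow> x \<in> S \<Longrightarrow> \<bar>f \<alpha> x\<bar> \<le> K * \<bar>\<alpha>\<bar> ^ k"
  shows "uniformly_bigo S k f"
  unfolding uniformly_bigo_def eventually_at using assms by auto

lemma uniformly_bigo_bounded:
  assumes "\<And>\<alpha> x. x \<in> S \<Longrightarrow> \<bar>f \<alpha> x\<bar> \<le> B"
  shows "uniformly_bigo S 0 f"
  using assms by (intro uniformly_bigoI[of 1]) auto

lemma uniformly_bigo_const_bounded:
  assumes "\<exists>B. \<forall>x\<in>S. \<bar>h x\<bar> \<le> B"
  shows "uniformly_bigo S 0 (\<lambda>\<alpha>. h)"
  using assms by (auto intro: uniformly_bigo_bounded)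

lemma uniformly_bigo_zero: "uniformly_bigo S k (\<lambda>\<alpha> x. 0)"
  unfolding uniformly_bigo_def by (auto intro: exI[of _ 0])

lemma uniformly_bigo_power: "uniformly_bigo S k (\<lambda>\<alpha> x. \<alpha> ^ k)"
  by (intro uniformly_bigoI[of 1 _ _ 1]) (simp_all add: power_abs)

lemma uniformly_bigo_le:
  assumes "uniformly_bigo S k g" and "c \<ge> 0" and "\<And>\<alpha> x. x \<in> S \<Longrightarrow> \<bar>f \<alpha> x\<bar> \<le> c * \<bar>g \<alpha> x\<bar>"
  shows "uniformly_bigo S k f"
proof -
  obtain K where "\<forall>\<^sub>F \<alpha> in at 0. \<forall>x\<in>S. \<bar>g \<alpha> x\<bar> \<le> K * \<bar>\<alpha>\<bar> ^ k"
    using assms(1) by (auto simp: uniformly_bigo_def)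
  then have "\<forall>\<^sub>F \<alpha> in at 0. \<forall>x\<in>S. \<bar>f \<alpha> x\<bar> \<le> (c * K) * \<bar>\<alpha>\<bar> ^ k"
    by eventually_elim (metis assms(2,3) mult.assoc mult_left_mono order_trans)
  then show ?thesis by (auto simp: uniformly_bigo_def)
qed

lemma uniformly_bigo_mono:
  assumes "uniformly_bigo S l f" and "k \<le> l"
  shows "uniformly_bigo S k f"
proof -
  obtain K where K: "\<forall>\<^sub>F \<alpha> in at 0. \<forall>x\<in>S. \<bar>f \<alpha> x\<bar> \<le> K * \<bar>\<alpha>\<bar> ^ l"
    using assms(1) by (auto simp: uniformly_bigo_def)
  have "\<forall>\<^sub>F \<alpha> in at 0. \<bar>\<alpha>\<bar> < (1::real)"
    using eventually_at[of "\<lambda>\<alpha>::real. \<bar>\<alpha>\<bar> < 1"] by (auto intro: exI[of _ 1])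
  with K have "\<forall>\<^sub>F \<alpha> in at 0. \<forall>x\<in>S. \<bar>f \<alpha> x\<bar> \<le> \<bar>K\<bar> * \<bar>\<alpha>\<bar> ^ k"
  proof eventually_elim
    case (elim \<alpha>)
    have "\<bar>\<alpha>\<bar> ^ l \<le> \<bar>\<alpha>\<bar> ^ k" using elim(2) \<open>k \<le> l\<close> by (intro power_decreasing) auto
    then have "K * \<bar>\<alpha>\<bar> ^ l \<le> \<bar>K\<bar> * \<bar>\<alpha>\<bar> ^ k"
      by (metis abs_ge_self abs_ge_zero mult_mono zero_le_power_abs)
    with elim(1) show ?case by force
  qed
  then show ?thesis by (auto simp: uniformly_bigo_def)
qed

lemma uniformly_bigo_add:
  assumes "uniformly_bigo S k f" and "uniformly_bigo S k g"
  shows "uniformly_bigo S k (\<lambda>\<alpha> x. f \<alpha> x + g \<alpha> x)"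
proof -
  obtain K L where "\<forall>\<^sub>F \<alpha> in at 0. \<forall>x\<in>S. \<bar>f \<alpha> x\<bar> \<le> K * \<bar>\<alpha>\<bar> ^ k"
    and "\<forall>\<^sub>F \<alpha> in at 0. \<forall>x\<in>S. \<bar>g \<alpha> x\<bar> \<le> L * \<bar>\<alpha>\<bar> ^ k"
    using assms by (auto simp: uniformly_bigo_def)
  then have "\<forall>\<^sub>F \<alpha> in at 0. \<forall>x\<in>S. \<bar>f \<alpha> x + g \<alpha> x\<bar> \<le> (K + L) * \<bar>\<alpha>\<bar> ^ k"
    by eventually_elim (fastforce simp: distrib_right intro: abs_triangle_ineq[THEN order_trans])
  then show ?thesis by (auto simp: uniformly_bigo_def)
qed

lemma uniformly_bigo_mult:
  assumes "uniformly_bigo S k f" and "uniformly_bigo S l g"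
  shows "uniformly_bigo S (k + l) (\<lambda>\<alpha> x. f \<alpha> x * g \<alpha> x)"
proof -
  obtain K L where "\<forall>\<^sub>F \<alpha> in at 0. \<forall>x\<in>S. \<bar>f \<alpha> x\<bar> \<le> K * \<bar>\<alpha>\<bar> ^ k"
    and "\<forall>\<^sub>F \<alpha> in at 0. \<forall>x\<in>S. \<bar>g \<alpha> x\<bar> \<le> L * \<bar>\<alpha>\<bar> ^ l"
    using assms by (auto simp: uniformly_bigo_def)
  then have "\<forall>\<^sub>F \<alpha> in at 0. \<forall>x\<in>S. \<bar>f \<alpha> x * g \<alpha> x\<bar> \<le> (K * L) * \<bar>\<alpha>\<bar> ^ (k + l)"
  proof eventually_elim
    case (elim \<alpha>)
    show ?case
    proof
      fix x assume "x \<in> S"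
      then have "\<bar>f \<alpha> x\<bar> * \<bar>g \<alpha> x\<bar> \<le> (K * \<bar>\<alpha>\<bar> ^ k) * (L * \<bar>\<alpha>\<bar> ^ l)"
        using elim by (intro mult_mono') auto
      then show "\<bar>f \<alpha> x * g \<alpha> x\<bar> \<le> (K * L) * \<bar>\<alpha>\<bar> ^ (k + l)"
        by (simp add: abs_mult power_add mult_ac)
    qed
  qed
  then show ?thesis by (auto simp: uniformly_bigo_def)
qed

lemma uniformly_bigo_sum:
  assumes "\<And>i. i \<in> I \<Longrightarrow> uniformly_bigo S k (f i)"
  shows "uniformly_bigo S k (\<lambda>\<alpha> x. \<Sum>i\<in>I. f i \<alpha> x)"
  using assms
proof (induction I rule: infinite_finite_induct)
  case (insert i I)
  then show ?case by (simp add: uniformly_bigo_add)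
qed (simp_all add: uniformly_bigo_zero)

lemma uniformly_bigo_prod:
  assumes "\<And>i. i \<in> I \<Longrightarrow> uniformly_bigo S (k i) (f i)"
  shows "uniformly_bigo S (\<Sum>i\<in>I. k i) (\<lambda>\<alpha> x. \<Prod>i\<in>I. f i \<alpha> x)"
  using assms
proof (induction I rule: infinite_finite_induct)
  case (insert i I)
  then show ?case by (simp add: uniformly_bigo_mult)
qed (auto intro: uniformly_bigo_bounded[where B=1])

lemma uniformly_bigo_prod_diff:
  assumes "\<And>i. i \<in> I \<Longrightarrow> uniformly_bigo S 0 (a i)" and "\<And>i. i \<in> I \<Longrightarrow> uniformly_bigo S 0 (b i)"
    and "\<And>i. i \<in> I \<Longrightarrow> uniformly_bigo S k (\<lambda>\<alpha> x. a i \<alpha> x - b i \<alpha> x)"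
  shows "uniformly_bigo S k (\<lambda>\<alpha> x. (\<Prod>i\<in>I. a i \<alpha> x) - (\<Prod>i\<in>I. b i \<alpha> x))"
  using assms
proof (induction I rule: infinite_finite_induct)
  case (insert i I)
  have "uniformly_bigo S (k + 0) (\<lambda>\<alpha> x. (a i \<alpha> x - b i \<alpha> x) * (\<Prod>i\<in>I. b i \<alpha> x))"
    using insert.prems uniformly_bigo_prod[of I S "\<lambda>_. 0" b] by (intro uniformly_bigo_mult) auto
  moreover have "uniformly_bigo S (0 + k) (\<lambda>\<alpha> x. a i \<alpha> x * ((\<Prod>i\<in>I. a i \<alpha> x) - (\<Prod>i\<in>I. b i \<alpha> x)))"
    using insert by (intro uniformly_bigo_mult) auto
  ultimately have "uniformly_bigo S k (\<lambda>\<alpha> x. (a i \<alpha> x - b i \<alpha> x) * (\<Prod>i\<in>I. b i \<alpha> x) +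
      a i \<alpha> x * ((\<Prod>i\<in>I. a i \<alpha> x) - (\<Prod>i\<in>I. b i \<alpha> x)))"
    by (intro uniformly_bigo_add) auto
  then show ?case
    by (rule uniformly_bigo_le[where c=1]) (simp_all add: insert.hyps algebra_simps)
qed (simp_all add: uniformly_bigo_zero)

section \<open>Determinants and the volume ratio\<close>

lemma continuous_on_det: "continuous_on S (det :: real^'n::finite^'n \<Rightarrow> real)"
  unfolding det_def[abs_def] by (intro continuous_intros)

lemma uniformly_bigo_det_diff:
  fixes A B :: "real \<Rightarrow> 'a \<Rightarrow> real^'n::finite^'n"
  assumes "\<And>i j. uniformly_bigo S 0 (\<lambda>\<alpha> x. A \<alpha> x $ i $ j)" and "\<And>i j. uniformly_bigo S 0 (\<lambda>\<alpha> x. B \<alpha> x $ i $ j)"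
    and "\<And>i j. uniformly_bigo S k (\<lambda>\<alpha> x. A \<alpha> x $ i $ j - B \<alpha> x $ i $ j)"
  shows "uniformly_bigo S k (\<lambda>\<alpha> x. det (A \<alpha> x) - det (B \<alpha> x))"
proof -
  have "det (A \<alpha> x) - det (B \<alpha> x) = (\<Sum>p | p permutes UNIV. of_int (sign p) *
      ((\<Prod>i\<in>UNIV. A \<alpha> x $ i $ p i) - (\<Prod>i\<in>UNIV. B \<alpha> x $ i $ p i)))" for \<alpha> x
    by (simp add: det_def sum_subtractf[symmetric] right_diff_distrib)
  moreover have "uniformly_bigo S (0 + k) (\<lambda>\<alpha> x. of_int (sign p) *
      ((\<Prod>i\<in>UNIV. A \<alpha> x $ i $ p i) - (\<Prod>i\<in>UNIV. B \<alpha> x $ i $ p i)))" for p :: "'n \<Rightarrow> 'n"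
    by (rule uniformly_bigo_mult, rule uniformly_bigo_bounded[where B=1])
      (auto simp: sign_def intro: uniformly_bigo_prod_diff assms)
  ultimately show ?thesis
    by (simp add: uniformly_bigo_sum)
qed

lemma det_neq_0_if_coercive:
  fixes A :: "real^'n::finite^'n"
  assumes "c > 0" and "\<forall>v. c * (norm v)\<^sup>2 \<le> v \<bullet> (A *v v)"
  shows "det A \<noteq> 0"
proof -
  have "inj ((*v) A)"
  proof (rule injI)
    fix x y assume "A *v x = A *v y"
    then have "A *v (x - y) = 0" by (simp add: matrix_vector_mult_diff_distrib)
    then have "c * (norm (x - y))\<^sup>2 \<le> 0" using assms(2) by (metis inner_zero_right)
    then show "x = y" using assms(1) by (simp add: mult_le_0_iff)
  qed
  then show ?thesis using det_nz_iff_inj[OF matrix_vector_mul_linear[of A]] by simp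
qed

lemma bounded_matrices:
  "bounded {A :: real^'n::finite^'n. \<forall>i j. \<bar>A $ i $ j\<bar> \<le> B}"
proof -
  have "norm A \<le> real CARD('n) * (real CARD('n) * B)" if "\<forall>i j. \<bar>A $ i $ j\<bar> \<le> B" for A :: "real^'n^'n"
  proof -
    have "norm A \<le> (\<Sum>i\<in>UNIV. norm (A $ i))"
      unfolding norm_vec_def by (rule order_trans[OF L2_set_le_sum_abs]) simp
    also have "\<dots> \<le> (\<Sum>i\<in>(UNIV::'n set). \<Sum>j\<in>(UNIV::'n set). B)"
      using that by (intro sum_mono order_trans[OF norm_le_l1_cart]) auto
    finally show ?thesis by simp
  qed
  then show ?thesis unfolding bounded_iff by blast
qed

text \<open>A coercive matrix is invertible, and the coercive matrices with bounded entries form a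
  compact set, on which the continuous function \<open>\<bar>det\<bar>\<close> attains a positive minimum.\<close>
lemma det_bounded_below_if_coercive:
  assumes "c > 0"
  obtains d where "d > 0" and "\<And>A :: real^'n::finite^'n. \<forall>i j. \<bar>A $ i $ j\<bar> \<le> B \<Longrightarrow>
    \<forall>v. c * (norm v)\<^sup>2 \<le> v \<bullet> (A *v v) \<Longrightarrow> d \<le> \<bar>det A\<bar>"
proof -
  define K where "K = {A :: real^'n^'n. (\<forall>i j. \<bar>A $ i $ j\<bar> \<le> B) \<and> (\<forall>v. c * (norm v)\<^sup>2 \<le> v \<bullet> (A *v v))}"
  have "closed K"
    unfolding K_def inner_vec_def matrix_vector_mult_def
    by (intro closed_Collect_conj closed_Collect_all closed_Collect_le continuous_intros)
  moreover have "bounded K"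
    by (rule bounded_subset[OF bounded_matrices[of B]]) (auto simp: K_def)
  ultimately have "compact K" by (simp add: compact_eq_bounded_closed)
  show ?thesis
  proof (cases "K = {}")
    case True
    then show ?thesis by (intro that[of 1]) (auto simp: K_def)
  next
    case False
    obtain A0 where "A0 \<in> K" and A0_min: "\<forall>A\<in>K. \<bar>det A0\<bar> \<le> \<bar>det A\<bar>"
      using continuous_attains_inf[OF \<open>compact K\<close> False continuous_on_rabs[OF continuous_on_det]] by blast
    then have "det A0 \<noteq> 0" using assms det_neq_0_if_coercive by (auto simp: K_def)
    with A0_min show ?thesis by (intro that[of "\<bar>det A0\<bar>"]) (auto simp: K_def)
  qed
qed

text \<open>The factor 2 covers \<open>r < 0\<close>, where \<open>sqrt r = - sqrt \<bar>r\<bar>\<close>.\<close>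
lemma abs_sqrt_minus_1_le: "\<bar>sqrt r - 1\<bar> \<le> 2 * \<bar>r - 1\<bar>"
proof (cases "r \<ge> 0")
  case True
  then have "1 \<le> \<bar>sqrt r + 1\<bar>"
    by simp
  then have "\<bar>sqrt r - 1\<bar> \<le> \<bar>sqrt r - 1\<bar> * \<bar>sqrt r + 1\<bar>"
    using mult_left_mono[of 1 _ "\<bar>sqrt r - 1\<bar>"] by simp
  also have "\<dots> = \<bar>(sqrt r - 1) * (sqrt r + 1)\<bar>"
    by (simp only: abs_mult)
  also have "\<dots> = \<bar>r - 1\<bar>"
    using True by (simp add: algebra_simps)
  also have "\<dots> \<le> 2 * \<bar>r - 1\<bar>"
    by simp
  finally show ?thesis .
next
  case False
  define s where "s = sqrt (- r)"
  have "r \<le> 1 + r\<^sup>2"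
    using False zero_le_power2[of r] by linarith
  then have "- r \<le> (1 - r)\<^sup>2"
    by (simp add: power2_diff)
  then have "s \<le> sqrt ((1 - r)\<^sup>2)"
    unfolding s_def by (rule real_sqrt_le_mono)
  also have "\<dots> = 1 - r"
    using False by simp
  finally have "s \<le> 1 - r" .
  moreover have "0 \<le> s"
    using False by (simp add: s_def)
  moreover have "sqrt r = - s"
    by (simp add: s_def real_sqrt_minus)
  ultimately show ?thesis
    using False by (simp add: abs_if)
qed

lemma uniformly_bigo_vol_ratio_cur_metric:
  fixes g0 Eb :: "'a \<Rightarrow> real^'n::finite^'n"
  assumes "c > 0" and "\<forall>x\<in>S. \<forall>v. c * (norm v)\<^sup>2 \<le> v \<bullet> (g0 x *v v)"
    and "\<forall>x\<in>S. \<forall>i j. \<bar>g0 x $ i $ j\<bar> \<le> B"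
    and Eb: "\<And>i j. uniformly_bigo S 0 (\<lambda>\<alpha> x. Eb x $ i $ j)"
  shows "uniformly_bigo S 1 (\<lambda>\<alpha> x. vol_ratio (g0 x) (cur_metric g0 Eb \<alpha> x) - 1)"
proof -
  obtain d where "d > 0" and d: "\<And>A :: real^'n^'n. \<forall>i j. \<bar>A $ i $ j\<bar> \<le> B \<Longrightarrow>
      \<forall>v. c * (norm v)\<^sup>2 \<le> v \<bullet> (A *v v) \<Longrightarrow> d \<le> \<bar>det A\<bar>"
    using det_bounded_below_if_coercive[OF \<open>c > 0\<close>] by blast
  have det_g0: "d \<le> \<bar>det (g0 x)\<bar>" if "x \<in> S" for x
    using d assms(2,3) that by blast
  have g0: "uniformly_bigo S 0 (\<lambda>\<alpha> x. g0 x $ i $ j)" for i j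
    using assms(3) by (intro uniformly_bigo_const_bounded) blast
  have shift: "uniformly_bigo S 1 (\<lambda>\<alpha> x. cur_metric g0 Eb \<alpha> x $ i $ j - g0 x $ i $ j)" for i j
  proof -
    have "uniformly_bigo S 0 (\<lambda>\<alpha> x. 2 * Eb x $ i $ j)"
      by (rule uniformly_bigo_le[OF Eb[of i j], of 2]) (simp_all add: abs_mult)
    then have "uniformly_bigo S 1 (\<lambda>\<alpha> x. \<alpha> ^ 1 * (2 * Eb x $ i $ j))"
      using uniformly_bigo_mult[OF uniformly_bigo_power[of S 1]] by simp
    then show ?thesis
      by (rule uniformly_bigo_le[where c=1]) (simp_all add: cur_metric_def)
  qed
  have cur: "uniformly_bigo S 0 (\<lambda>\<alpha> x. cur_metric g0 Eb \<alpha> x $ i $ j)" for i j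
  proof -
    have "uniformly_bigo S 0 (\<lambda>\<alpha> x. g0 x $ i $ j + (cur_metric g0 Eb \<alpha> x $ i $ j - g0 x $ i $ j))"
      by (rule uniformly_bigo_add[OF g0 uniformly_bigo_mono[OF shift]]) simp
    then show ?thesis
      by (rule uniformly_bigo_le[where c=1]) simp_all
  qed
  have "uniformly_bigo S 1 (\<lambda>\<alpha> x. det (cur_metric g0 Eb \<alpha> x) - det (g0 x))"
    using cur g0 shift by (rule uniformly_bigo_det_diff)
  moreover have "uniformly_bigo S 0 (\<lambda>\<alpha> x. 1 / det (g0 x))"
    using det_g0 \<open>d > 0\<close> by (intro uniformly_bigo_bounded[where B="1 / d"]) (simp add: frac_le)
  ultimately have "uniformly_bigo S (1 + 0) (\<lambda>\<alpha> x. (det (cur_metric g0 Eb \<alpha> x) - det (g0 x)) * (1 / det (g0 x)))"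
    by (rule uniformly_bigo_mult)
  then have "uniformly_bigo S 1 (\<lambda>\<alpha> x. (det (cur_metric g0 Eb \<alpha> x) - det (g0 x)) * (1 / det (g0 x)))"
    by (simp only: add_0_right)
  then show ?thesis
  proof (rule uniformly_bigo_le[where c=2])
    fix \<alpha> x assume "x \<in> S"
    then have "det (g0 x) \<noteq> 0" using det_g0 \<open>d > 0\<close> by fastforce
    then show "\<bar>vol_ratio (g0 x) (cur_metric g0 Eb \<alpha> x) - 1\<bar> \<le>
        2 * \<bar>(det (cur_metric g0 Eb \<alpha> x) - det (g0 x)) * (1 / det (g0 x))\<bar>"
      using abs_sqrt_minus_1_le by (simp add: vol_ratio_def diff_divide_distrib)
  qed simp
qed

section \<open>Contractions and strain energies\<close>

lemma contract_diff_left: "contract C E - contract C' E = contract (\<lambda>i j k l. C i j k l - C' i j k l) E"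
  by (simp add: contract_def sum_subtractf[symmetric] left_diff_distrib)

lemma contract_scaleR: "contract C (a *\<^sub>R E) = a\<^sup>2 * contract C E"
  by (simp add: contract_def sum_distrib_left power2_eq_square mult_ac)

lemma uniformly_bigo_contract:
  assumes "\<And>i j k l. uniformly_bigo S m (\<lambda>\<alpha> x. C \<alpha> x i j k l)"
    and "\<And>i j. uniformly_bigo S 0 (\<lambda>\<alpha> x. E \<alpha> x $ i $ j)"
  shows "uniformly_bigo S m (\<lambda>\<alpha> x. contract (C \<alpha> x) (E \<alpha> x))"
  unfolding contract_def
  using uniformly_bigo_mult[OF uniformly_bigo_mult[OF assms(1) assms(2)] assms(2)]
  by (simp add: uniformly_bigo_sum)

lemma uniformly_bigo_contract_perturbation:
  assumes C: "\<And>i j k l. uniformly_bigo S 0 (\<lambda>\<alpha> x. C x i j k l)"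
    and C': "\<And>i j k l. uniformly_bigo S 1 (\<lambda>\<alpha> x. C' \<alpha> x i j k l - C x i j k l)"
    and E: "\<And>i j. uniformly_bigo S 0 (\<lambda>\<alpha> x. E x $ i $ j)"
    and \<rho>: "uniformly_bigo S 1 (\<lambda>\<alpha> x. \<rho> \<alpha> x - 1)"
  shows "uniformly_bigo S 1 (\<lambda>\<alpha> x. contract (C' \<alpha> x) (E x) * \<rho> \<alpha> x - contract (C x) (E x))"
proof -
  have "uniformly_bigo S 0 (\<lambda>\<alpha> x. (\<rho> \<alpha> x - 1) + 1)"
    by (rule uniformly_bigo_add[OF uniformly_bigo_mono[OF \<rho>] uniformly_bigo_bounded[where B=1]]) simp_all
  then have "uniformly_bigo S 0 \<rho>"
    by (rule uniformly_bigo_le[where c=1]) simp_all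
  then have "uniformly_bigo S (1 + 0) (\<lambda>\<alpha> x. contract (\<lambda>i j k l. C' \<alpha> x i j k l - C x i j k l) (E x) * \<rho> \<alpha> x)"
    using C' E by (intro uniformly_bigo_mult uniformly_bigo_contract)
  moreover have "uniformly_bigo S (0 + 1) (\<lambda>\<alpha> x. contract (C x) (E x) * (\<rho> \<alpha> x - 1))"
    using C E \<rho> by (intro uniformly_bigo_mult uniformly_bigo_contract)
  ultimately have "uniformly_bigo S 1 (\<lambda>\<alpha> x.
      contract (\<lambda>i j k l. C' \<alpha> x i j k l - C x i j k l) (E x) * \<rho> \<alpha> x + contract (C x) (E x) * (\<rho> \<alpha> x - 1))"
    by (intro uniformly_bigo_add) simp_all
  then show ?thesis
  proof (rule uniformly_bigo_le[where c=1])
    fix \<alpha> x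
    show "\<bar>contract (C' \<alpha> x) (E x) * \<rho> \<alpha> x - contract (C x) (E x)\<bar> \<le> 1 * \<bar>contract (\<lambda>i j k l. C' \<alpha> x i j k l - C x i j k l) (E x) * \<rho> \<alpha> x + contract (C x) (E x) * (\<rho> \<alpha> x - 1)\<bar>"
      unfolding contract_diff_left[symmetric] by (simp add: algebra_simps)
  qed simp
qed

lemma strain_energy_cur_metric:
  "strain_energy M C (\<lambda>x. green_strain (g0 x) (cur_metric g0 Eb \<alpha> x)) (\<lambda>x. 1) =
    (\<integral>x. \<alpha>\<^sup>2 * (contract (C x) (Eb x) / 2) \<partial>M)"
proof -
  have strain: "green_strain (g0 x) (cur_metric g0 Eb \<alpha> x) = \<alpha> *\<^sub>R Eb x" for x
    by (simp add: green_strain_def cur_metric_def)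
  show ?thesis
    unfolding strain_energy_def strain contract_scaleR by (simp add: mult_ac)
qed

lemma strain_energy_swapped_cur_metric:
  "strain_energy M C (\<lambda>x. green_strain (cur_metric g0 Eb \<alpha> x) (g0 x)) \<rho> =
    (\<integral>x. \<alpha>\<^sup>2 * (contract (C x) (Eb x) * \<rho> x / 2) \<partial>M)"
proof -
  have strain: "green_strain (cur_metric g0 Eb \<alpha> x) (g0 x) = (- \<alpha>) *\<^sub>R Eb x" for x
    by (simp add: green_strain_def cur_metric_def)
  show ?thesis
    unfolding strain_energy_def strain contract_scaleR by (simp add: mult_ac)
qed

section \<open>Integration of uniform bounds\<close>

lemma (in finite_measure) integral_uniformly_bigo:
  assumes "uniformly_bigo (space M) k f"
  shows "(\<lambda>\<alpha>. \<integral>x. f \<alpha> x \<partial>M) \<in> O[at 0](\<lambda>\<alpha>. \<alpha> ^ k)"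
proof -
  obtain K where "\<forall>\<^sub>F \<alpha> in at 0. \<forall>x\<in>space M. \<bar>f \<alpha> x\<bar> \<le> K * \<bar>\<alpha>\<bar> ^ k"
    using assms by (auto simp: uniformly_bigo_def)
  then have "\<forall>\<^sub>F \<alpha> in at 0. norm (\<integral>x. f \<alpha> x \<partial>M) \<le> (measure M (space M) * K) * norm (\<alpha> ^ k)"
  proof eventually_elim
    case (elim \<alpha>)
    have "norm (\<integral>x. f \<alpha> x \<partial>M) \<le> (\<integral>x. norm (f \<alpha> x) \<partial>M)"
      by (rule integral_norm_bound)
    also have "\<dots> \<le> (\<integral>x. K * \<bar>\<alpha>\<bar> ^ k \<partial>M)"
      using elim by (intro integral_mono') (auto intro: order_trans[OF abs_ge_zero])
    also have "\<dots> = (measure M (space M) * K) * norm (\<alpha> ^ k)"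
      by (simp add: power_abs)
    finally show ?case .
  qed
  then show ?thesis
    by (rule bigoI)
qed

lemma (in finite_measure) eventually_integrable_if_uniformly_bigo:
  assumes "uniformly_bigo (space M) 0 f" and "\<And>\<alpha>. f \<alpha> \<in> borel_measurable M"
  shows "\<forall>\<^sub>F \<alpha> in at 0. integrable M (f \<alpha>)"
proof -
  obtain K where "\<forall>\<^sub>F \<alpha> in at 0. \<forall>x\<in>space M. \<bar>f \<alpha> x\<bar> \<le> K * \<bar>\<alpha>\<bar> ^ 0"
    using assms(1) by (auto simp: uniformly_bigo_def)
  then show ?thesis
  proof eventually_elim
    case (elim \<alpha>)
    then have "AE x in M. norm (f \<alpha> x) \<le> K"
      by (intro AE_I2) simp
    then show ?case
      using assms(2) by (rule integrable_const_bound)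
  qed
qed

lemma (in finite_measure) integral_diff_uniformly_bigo:
  assumes g: "uniformly_bigo (space M) 0 g" and fg: "uniformly_bigo (space M) k (\<lambda>\<alpha> x. f \<alpha> x - g \<alpha> x)"
    and f_meas: "\<And>\<alpha>. f \<alpha> \<in> borel_measurable M" and g_meas: "\<And>\<alpha>. g \<alpha> \<in> borel_measurable M"
  shows "(\<lambda>\<alpha>. (\<integral>x. f \<alpha> x \<partial>M) - (\<integral>x. g \<alpha> x \<partial>M)) \<in> O[at 0](\<lambda>\<alpha>. \<alpha> ^ k)"
proof -
  have "uniformly_bigo (space M) 0 (\<lambda>\<alpha> x. (f \<alpha> x - g \<alpha> x) + g \<alpha> x)"
    by (rule uniformly_bigo_add[OF uniformly_bigo_mono[OF fg] g]) simp
  then have "uniformly_bigo (space M) 0 f"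
    by (rule uniformly_bigo_le[where c=1]) simp_all
  then have "\<forall>\<^sub>F \<alpha> in at 0. integrable M (f \<alpha>) \<and> integrable M (g \<alpha>)"
    using eventually_integrable_if_uniformly_bigo[OF _ f_meas] eventually_integrable_if_uniformly_bigo[OF g g_meas]
    by (simp add: eventually_conj)
  then have "\<forall>\<^sub>F \<alpha> in at 0. (\<integral>x. f \<alpha> x - g \<alpha> x \<partial>M) = (\<integral>x. f \<alpha> x \<partial>M) - (\<integral>x. g \<alpha> x \<partial>M)"
    by eventually_elim (simp add: Bochner_Integration.integral_diff)
  then show ?thesis
    using integral_uniformly_bigo[OF fg] by (simp add: landau_o.big.in_cong)
qed

lemma borel_measurable_det:
  fixes A :: "'a \<Rightarrow> real^'n::finite^'n"
  assumes "\<And>i j. (\<lambda>x. A x $ i $ j) \<in> borel_measurable M"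
  shows "(\<lambda>x. det (A x)) \<in> borel_measurable M"
  unfolding det_def using assms by measurable

lemma borel_measurable_contract:
  fixes C :: "'a \<Rightarrow> 'n::finite tensor4" and E :: "'a \<Rightarrow> real^'n^'n"
  assumes "\<And>i j k l. (\<lambda>x. C x i j k l) \<in> borel_measurable M"
    and "\<And>i j. (\<lambda>x. E x $ i $ j) \<in> borel_measurable M"
  shows "(\<lambda>x. contract (C x) (E x)) \<in> borel_measurable M"
  unfolding contract_def using assms by measurable

lemma borel_measurable_vol_ratio_cur_metric:
  fixes g0 Eb :: "'a \<Rightarrow> real^'n::finite^'n"
  assumes [measurable]: "\<And>i j. (\<lambda>x. g0 x $ i $ j) \<in> borel_measurable M"
    "\<And>i j. (\<lambda>x. Eb x $ i $ j) \<in> borel_measurable M"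
  shows "(\<lambda>x. vol_ratio (g0 x) (cur_metric g0 Eb \<alpha> x)) \<in> borel_measurable M"
proof -
  have "(\<lambda>x. det (cur_metric g0 Eb \<alpha> x)) \<in> borel_measurable M"
    by (rule borel_measurable_det) (simp add: cur_metric_def)
  with borel_measurable_det[OF assms(1)] show ?thesis
    unfolding vol_ratio_def by measurable
qed

lemma (in finite_measure) quadratic_energy_diff_bigo:
  assumes q: "uniformly_bigo (space M) 0 (\<lambda>\<alpha>. q)" and pq: "uniformly_bigo (space M) 1 (\<lambda>\<alpha> x. p \<alpha> x - q x)"
    and [measurable]: "\<And>\<alpha>. p \<alpha> \<in> borel_measurable M" "q \<in> borel_measurable M"
  shows "(\<lambda>\<alpha>. (\<integral>x. \<alpha>\<^sup>2 * (p \<alpha> x / 2) \<partial>M) - (\<integral>x. \<alpha>\<^sup>2 * (q x / 2) \<partial>M)) \<in> O[at 0](\<lambda>\<alpha>. \<alpha> ^ 3)"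
proof (rule integral_diff_uniformly_bigo)
  have "uniformly_bigo (space M) 0 (\<lambda>\<alpha> x. q x / 2)"
    by (rule uniformly_bigo_le[OF q, of "1/2"]) simp_all
  then have "uniformly_bigo (space M) (2 + 0) (\<lambda>\<alpha> x. \<alpha> ^ 2 * (q x / 2))"
    by (rule uniformly_bigo_mult[OF uniformly_bigo_power])
  then show "uniformly_bigo (space M) 0 (\<lambda>\<alpha> x. \<alpha>\<^sup>2 * (q x / 2))"
    by (rule uniformly_bigo_mono) simp
  have "uniformly_bigo (space M) (2 + 1) (\<lambda>\<alpha> x. \<alpha> ^ 2 * (p \<alpha> x - q x))"
    by (rule uniformly_bigo_mult[OF uniformly_bigo_power pq])
  then have "uniformly_bigo (space M) 3 (\<lambda>\<alpha> x. \<alpha> ^ 2 * (p \<alpha> x - q x))"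
    by simp
  then show "uniformly_bigo (space M) 3 (\<lambda>\<alpha> x. \<alpha>\<^sup>2 * (p \<alpha> x / 2) - \<alpha>\<^sup>2 * (q x / 2))"
    by (rule uniformly_bigo_le[where c="1/2"]) (simp_all add: abs_mult field_simps)
  show "(\<lambda>x. \<alpha>\<^sup>2 * (p \<alpha> x / 2)) \<in> borel_measurable M" for \<alpha>
    by measurable
  show "(\<lambda>x. \<alpha>\<^sup>2 * (q x / 2)) \<in> borel_measurable M" for \<alpha>
    by measurable
qed

theorem mainTheorem1:
  fixes M :: "'a measure"
    and g0 Eb :: "'a \<Rightarrow> real^'n::finite^'n"
    and C :: "'a \<Rightarrow> 'n tensor4"
    and Chat :: "real \<Rightarrow> 'a \<Rightarrow> 'n tensor4"
  assumes finM: "finite_measure M"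
    and g0_meas: "\<And>i j. (\<lambda>x. g0 x $ i $ j) \<in> borel_measurable M"
    and Eb_meas: "\<And>i j. (\<lambda>x. Eb x $ i $ j) \<in> borel_measurable M"
    and C_meas: "\<And>i j k l. (\<lambda>x. C x i j k l) \<in> borel_measurable M"
    and Chat_meas: "\<And>\<alpha> i j k l. (\<lambda>x. Chat \<alpha> x i j k l) \<in> borel_measurable M"
    and g0_sym: "\<And>x. x \<in> space M \<Longrightarrow> symmetric_mat (g0 x)"
    and g0_pos: "\<exists>c>0. \<forall>x\<in>space M. \<forall>v. v \<bullet> (g0 x *v v) \<ge> c * (norm v)\<^sup>2"
    and g0_bdd: "\<exists>B. \<forall>x\<in>space M. \<forall>i j. \<bar>g0 x $ i $ j\<bar> \<le> B"
    and Eb_sym: "\<And>x. x \<in> space M \<Longrightarrow> symmetric_mat (Eb x)"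
    and Eb_bdd: "\<exists>B. \<forall>x\<in>space M. \<forall>i j. \<bar>Eb x $ i $ j\<bar> \<le> B"
    and C_stiff: "\<And>x. x \<in> space M \<Longrightarrow> is_stiffness (C x)"
    and C_bdd: "\<exists>B. \<forall>x\<in>space M. \<forall>i j k l. \<bar>C x i j k l\<bar> \<le> B"
    and Chat_stiff: "\<And>\<alpha> x. x \<in> space M \<Longrightarrow> is_stiffness (Chat \<alpha> x)"
    and Chat_approx: "\<exists>K \<delta>. \<delta> > 0 \<and> (\<forall>\<alpha>. \<bar>\<alpha>\<bar> < \<delta> \<longrightarrow>
                 (\<forall>x\<in>space M. \<forall>i j k l. \<bar>Chat \<alpha> x i j k l - C x i j k l\<bar> \<le> K * \<bar>\<alpha>\<bar>))"
  defines "W \<equiv> (\<lambda>\<alpha>. strain_energy M C (\<lambda>x. green_strain (g0 x) (cur_metric g0 Eb \<alpha> x)) (\<lambda>x. 1))"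
    and "What \<equiv> (\<lambda>\<alpha>. strain_energy M (Chat \<alpha>)
                 (\<lambda>x. green_strain (cur_metric g0 Eb \<alpha> x) (g0 x))
                 (\<lambda>x. vol_ratio (g0 x) (cur_metric g0 Eb \<alpha> x)))"
  shows "(\<lambda>\<alpha>. What \<alpha> - W \<alpha>) \<in> O[at 0](\<lambda>\<alpha>. \<alpha> ^ 3)"
proof -
  interpret finite_measure M by (rule finM)
  have Eb: "uniformly_bigo (space M) 0 (\<lambda>\<alpha> x. Eb x $ i $ j)" for i j
    using Eb_bdd by (intro uniformly_bigo_const_bounded) blast
  have C: "uniformly_bigo (space M) 0 (\<lambda>\<alpha> x. C x i j k l)" for i j k l
    using C_bdd by (intro uniformly_bigo_const_bounded) blast
  obtain K \<delta> where "\<delta> > 0"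
    and "\<forall>\<alpha>. \<bar>\<alpha>\<bar> < \<delta> \<longrightarrow> (\<forall>x\<in>space M. \<forall>i j k l. \<bar>Chat \<alpha> x i j k l - C x i j k l\<bar> \<le> K * \<bar>\<alpha>\<bar>)"
    using Chat_approx by blast
  then have Chat: "uniformly_bigo (space M) 1 (\<lambda>\<alpha> x. Chat \<alpha> x i j k l - C x i j k l)" for i j k l
    by (intro uniformly_bigoI[of \<delta> _ _ K]) auto
  obtain c B where "c > 0" and "\<forall>x\<in>space M. \<forall>v. c * (norm v)\<^sup>2 \<le> v \<bullet> (g0 x *v v)"
    and "\<forall>x\<in>space M. \<forall>i j. \<bar>g0 x $ i $ j\<bar> \<le> B"
    using g0_pos g0_bdd by blast
  then have "uniformly_bigo (space M) 1 (\<lambda>\<alpha> x. vol_ratio (g0 x) (cur_metric g0 Eb \<alpha> x) - 1)"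
    using Eb by (rule uniformly_bigo_vol_ratio_cur_metric)
  then have "uniformly_bigo (space M) 1 (\<lambda>\<alpha> x. contract (Chat \<alpha> x) (Eb x) *
      vol_ratio (g0 x) (cur_metric g0 Eb \<alpha> x) - contract (C x) (Eb x))"
    by (rule uniformly_bigo_contract_perturbation[OF C Chat Eb])
  then show ?thesis
    unfolding W_def What_def strain_energy_cur_metric strain_energy_swapped_cur_metric
    using borel_measurable_contract[OF Chat_meas Eb_meas] borel_measurable_contract[OF C_meas Eb_meas]
      borel_measurable_vol_ratio_cur_metric[OF g0_meas Eb_meas]
    by (intro quadratic_energy_diff_bigo uniformly_bigo_contract[OF C Eb]) measurable
qed

end
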